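(* For every integer $t\ge1$ and every integer $u$ with $0\le u\le t$, $$\frac{2u+1}{2t}\ \ge\ \frac{1}{1+2t}+\frac{2t}{1+2t}\sum_{i=1}^u\frac{(-t)_i(-1)^i}{(t+i)\,(t)_i}\ \ge\ \frac{2u+1}{2t}-\frac{4u^3+6u^2+8u+3}{12t^2}.$$
   Context: $(a)_m=a(a+1)\cdots(a+m-1)$ denotes the rising factorial, with $(a)_0=1$. *)

theory Defs
  imports Complex_Main
begin

end

theory Submission
  imports Defs "HOL-Analysis.Infinite_Products"
begin

text \<open>Since \<open>(-t)\<^sub>i (-1)\<^sup>i / (t)\<^sub>i = \<Prod>\<^sub>j\<^sub><\<^sub>i (t - j)/(t + j)\<close>, the i-th summand is
  \<open>p\<^sub>i / (t + i)\<close> with \<open>p\<^sub>i\<close> a product of factors \<open>1 - 2j/(t + j)\<close> in \<open>[0, 1]\<close>.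
  Hence \<open>0 \<le> p\<^sub>i \<le> 1\<close>, and the Weierstrass product inequality gives \<open>p\<^sub>i \<ge> 1 - i(i - 1)/t\<close>.
  So each summand lies between \<open>1/t - i\<^sup>2/t\<^sup>2\<close> and \<open>1/t\<close>; summing over \<open>i \<le> u\<close> and
  inserting the bounds into the affine map \<open>X \<mapsto> (1 + 2tX)/(1 + 2t)\<close> yields both inequalities.\<close>

lemma pochhammer_minus_mult_neg_one_power:
  fixes x :: "'a::comm_ring_1"
  shows "pochhammer (- x) n * (- 1) ^ n = (\<Prod>j<n. x - of_nat j)"
proof -
  have "(\<Prod>j<n. x - of_nat j) = (\<Prod>j<n. - 1 * (- x + of_nat j))"
    by simp
  also have "\<dots> = (- 1) ^ n * (\<Prod>j<n. - x + of_nat j)"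
    by (subst prod.distrib) simp
  also have "\<dots> = (- 1) ^ n * pochhammer (- x) n"
    by (simp only: pochhammer_prod atLeast0LessThan)
  finally show ?thesis
    by (metis mult.commute)
qed

lemma pochhammer_quotient_eq_prod:
  fixes x :: "'a::field"
  shows "pochhammer (- x) i * (- 1) ^ i / ((x + of_nat i) * pochhammer x i)
       = (\<Prod>j<i. (x - of_nat j) / (x + of_nat j)) / (x + of_nat i)"
proof -
  have "pochhammer x i = (\<Prod>j<i. x + of_nat j)"
    by (simp add: pochhammer_prod atLeast0LessThan)
  then show ?thesis
    by (simp add: pochhammer_minus_mult_neg_one_power prod_dividef)
qed

lemma sum_squares_real:
  "(\<Sum>i=1..n. real i ^ 2) = real n * (real n + 1) * (2 * real n + 1) / 6"
  by (induction n) (simp_all add: field_simps power2_eq_square)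

lemma real_of_nat_sum_lessThan:
  "(\<Sum>j<n. real j) = real n * (real n - 1) / 2"
  by (induction n) (simp_all add: field_simps)

lemma prod_ratio_bounds:
  fixes x :: real
  assumes "0 < x" and "real i \<le> x"
  defines "p \<equiv> \<Prod>j<i. (x - real j) / (x + real j)"
  shows "0 \<le> p" and "p \<le> 1" and "1 - real i * (real i - 1) / x \<le> p"
proof -
  have factor: "(x - real j) / (x + real j) = 1 - 2 * real j / (x + real j)" for j
    using \<open>0 < x\<close> by (simp add: field_simps)
  have weight: "2 * real j / (x + real j) \<in> {0..1}" if "j < i" for j
    using that assms(1,2) by (auto simp: field_simps)
  show "0 \<le> p" "p \<le> 1"
    unfolding p_def factor using weight by (auto intro!: prod_nonneg prod_le_1)
  have "(\<Sum>j<i. 2 * real j / (x + real j)) \<le> (\<Sum>j<i. 2 * real j / x)"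
    using \<open>0 < x\<close> by (intro sum_mono frac_le) auto
  also have "\<dots> = real i * (real i - 1) / x"
    by (simp add: sum_divide_distrib[symmetric] sum_distrib_left[symmetric] real_of_nat_sum_lessThan)
  finally show "1 - real i * (real i - 1) / x \<le> p"
    using Weierstrass_prod_ineq[of "{..<i}" "\<lambda>j. 2 * real j / (x + real j)"] weight
    unfolding p_def factor by force
qed

lemma inverse_minus_square_le:
  fixes x y :: real
  assumes "0 < x" and "0 \<le> y"
  shows "1 / x - y ^ 2 / x ^ 2 \<le> (1 - y * (y - 1) / x) / (x + y)"
proof -
  have "1 / x - y ^ 2 / x ^ 2 = (x - y ^ 2) / x ^ 2"
    using assms by (simp add: field_simps power2_eq_square)
  also have "\<dots> \<le> (x - y ^ 2 + y) / (x * (x + y))"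
  proof -
    have "(x - y ^ 2) * (x * (x + y)) \<le> (x - y ^ 2 + y) * x ^ 2"
      using assms by (simp add: algebra_simps power2_eq_square)
    then show ?thesis
      using assms by (simp add: divide_simps)
  qed
  also have "\<dots> = (1 - y * (y - 1) / x) / (x + y)"
    using assms by (simp add: field_simps power2_eq_square)
  finally show ?thesis .
qed

lemma prod_ratio_term_bounds:
  fixes x :: real
  assumes "0 < x" and "real i \<le> x"
  defines "p \<equiv> \<Prod>j<i. (x - real j) / (x + real j)"
  shows "p / (x + real i) \<le> 1 / x" and "1 / x - real i ^ 2 / x ^ 2 \<le> p / (x + real i)"
proof -
  show "p / (x + real i) \<le> 1 / x"
    using prod_ratio_bounds[OF assms(1,2)] \<open>0 < x\<close> unfolding p_def by (intro frac_le) auto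
  have "1 / x - real i ^ 2 / x ^ 2 \<le> (1 - real i * (real i - 1) / x) / (x + real i)"
    using \<open>0 < x\<close> by (intro inverse_minus_square_le) auto
  also have "\<dots> \<le> p / (x + real i)"
    using prod_ratio_bounds(3)[OF assms(1,2)] \<open>0 < x\<close> unfolding p_def
    by (intro divide_right_mono) auto
  finally show "1 / x - real i ^ 2 / x ^ 2 \<le> p / (x + real i)" .
qed

lemma prod_ratio_sum_bounds:
  fixes x :: real
  assumes "0 < x" and "real u \<le> x"
  defines "X \<equiv> \<Sum>i=1..u. (\<Prod>j<i. (x - real j) / (x + real j)) / (x + real i)"
  shows "X \<le> real u / x"
    and "real u / x - real u * (real u + 1) * (2 * real u + 1) / (6 * x ^ 2) \<le> X"
proof -
  have i_le: "real i \<le> x" if "i \<in> {1..u}" for i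
    using that assms(2) by auto
  have "X \<le> (\<Sum>i=1..u. 1 / x)"
    unfolding X_def using prod_ratio_term_bounds(1)[OF assms(1) i_le] by (rule sum_mono)
  then show "X \<le> real u / x"
    by simp
  have "(\<Sum>i=1..u. 1 / x - real i ^ 2 / x ^ 2) \<le> X"
    unfolding X_def using prod_ratio_term_bounds(2)[OF assms(1) i_le] by (rule sum_mono)
  moreover have "(\<Sum>i=1..u. 1 / x - real i ^ 2 / x ^ 2) = real u / x - (\<Sum>i=1..u. real i ^ 2) / x ^ 2"
    by (simp add: sum_subtractf sum_divide_distrib)
  ultimately show "real u / x - real u * (real u + 1) * (2 * real u + 1) / (6 * x ^ 2) \<le> X"
    unfolding sum_squares_real by simp
qed

lemma convex_comb_upper_bound:
  fixes x U X :: real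
  assumes "0 < x" and "0 \<le> U" and "X \<le> U / x"
  shows "1 / (1 + 2 * x) + (2 * x / (1 + 2 * x)) * X \<le> (2 * U + 1) / (2 * x)"
proof -
  have "1 / (1 + 2 * x) + (2 * x / (1 + 2 * x)) * X \<le> 1 / (1 + 2 * x) + (2 * x / (1 + 2 * x)) * (U / x)"
    using assms by (intro add_left_mono mult_left_mono) auto
  also have "\<dots> = (2 * U + 1) / (1 + 2 * x)"
    using assms by (simp add: field_simps)
  also have "\<dots> \<le> (2 * U + 1) / (2 * x)"
    using assms by (intro divide_left_mono) auto
  finally show ?thesis .
qed

lemma convex_comb_lower_bound:
  fixes x U X :: real
  assumes "0 < x" and "0 \<le> U" and "U / x - U * (U + 1) * (2 * U + 1) / (6 * x ^ 2) \<le> X"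
  shows "(2 * U + 1) / (2 * x) - (4 * U ^ 3 + 6 * U ^ 2 + 8 * U + 3) / (12 * x ^ 2)
       \<le> 1 / (1 + 2 * x) + (2 * x / (1 + 2 * x)) * X"
proof -
  define C where "C = U * (U + 1) * (2 * U + 1)"
  define B where "B = U / x - C / (6 * x ^ 2)"
  have "(2 * U + 1) / (2 * x) - (4 * U ^ 3 + 6 * U ^ 2 + 8 * U + 3) / (12 * x ^ 2)
      = (6 * x * (2 * U + 1) - 3 * (2 * U + 1) - 2 * C) / (12 * x ^ 2)"
    using assms(1) by (simp add: C_def field_simps power2_eq_square power3_eq_cube)
  also have "\<dots> \<le> (2 * U + 1 - C / (3 * x)) / (1 + 2 * x)"
  proof -
    \<comment> \<open>the right side exceeds the left by \<open>3x (3 (2U + 1) + 2C) \<ge> 0\<close>\<close>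
    have "(6 * x * (2 * U + 1) - 3 * (2 * U + 1) - 2 * C) * (3 * x * (1 + 2 * x))
        \<le> (3 * x * (2 * U + 1) - C) * (12 * x ^ 2)"
      using assms(1,2) by (simp add: C_def algebra_simps power2_eq_square)
    then show ?thesis
      using assms(1) by (simp add: divide_simps) (simp add: mult_ac)
  qed
  also have "\<dots> = 1 / (1 + 2 * x) + (2 * x / (1 + 2 * x)) * B"
  proof -
    have "2 * x * B = 2 * U - C / (3 * x)"
      using assms(1) by (simp add: B_def field_simps power2_eq_square)
    then show ?thesis
      by (simp add: add_divide_distrib diff_divide_distrib)
  qed
  also have "\<dots> \<le> 1 / (1 + 2 * x) + (2 * x / (1 + 2 * x)) * X"
    using assms by (intro add_left_mono mult_left_mono) (auto simp: B_def C_def)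
  finally show ?thesis .
qed

theorem mainTheorem8:
  fixes t u :: nat
  assumes "t \<ge> 1" and "u \<le> t"
  defines "S \<equiv> 1 / (1 + 2 * real t) + (2 * real t / (1 + 2 * real t)) *
      (\<Sum>i=1..u. pochhammer (- real t) i * (-1) ^ i / ((real t + real i) * pochhammer (real t) i))"
  shows "(2 * real u + 1) / (2 * real t) \<ge> S
       \<and> S \<ge> (2 * real u + 1) / (2 * real t)
              - (4 * real u ^ 3 + 6 * real u ^ 2 + 8 * real u + 3) / (12 * real t ^ 2)"
proof -
  have t_pos: "0 < real t" and u_le: "real u \<le> real t"
    using assms(1,2) by auto
  have "S = 1 / (1 + 2 * real t) + (2 * real t / (1 + 2 * real t)) *
      (\<Sum>i=1..u. (\<Prod>j<i. (real t - real j) / (real t + real j)) / (real t + real i))"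
    unfolding S_def by (simp add: pochhammer_quotient_eq_prod)
  then show ?thesis
    using convex_comb_upper_bound[OF t_pos _ prod_ratio_sum_bounds(1)[OF t_pos u_le]]
      convex_comb_lower_bound[OF t_pos _ prod_ratio_sum_bounds(2)[OF t_pos u_le]]
    by simp
qed

end
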